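(* Let $A=(\Sigma,\mathcal{M},Q,q_0,X,I,E,r)$ be a weighted timed Büchi automaton (WTBA) and $c\in\mathbb{N}$. Let $N$ be the maximum constant appearing in any invariant $I(q)$, $q\in Q$, or in any guard $g$ of an edge $(q,\ell,M,g,R,q')\in E$. Then there exists a WTBA $\bar A=(\Sigma\cup\{\epsilon\},\mathcal{M},Q,q_0,X,\bar I,\bar E,r)$ (with $\epsilon\notin\Sigma$ a new letter) such that (1) $v(x)\le N+2$ for all $x\in X$ and all states $(q,v)$ of $[\![\bar A]\!]$, and (2) there exists a $c$-feasible Büchi accepted (infinite) run in $[\![A]\!]$ if and only if there exists a $c$-feasible Büchi accepted (infinite) run in $[\![\bar A]\!]$.
   Context: Weighted Büchi automata (WBA): a structure $(\Sigma,\mathcal{M},S,s_0,T)$ with alphabet $\Sigma$, finite color set $\mathcal{M}$, state set $S$, initial state $s_0$, and transitions $T\subseteq S\times\Sigma\times 2^{\mathcal{M}}\times\mathbb{R}\times S$; a transition $(s,\ell,M,w,s')$ has letter $\ell$, color set $M$, weight $w$. A run is a finite or infinite sequence of consecutive transitions $s_1\to s_2\to\cdots$. A weak upper bound $b\in\mathbb{N}$ is fixed throughout. For initial credit $c$ and run with weights $w_1,w_2,\dots$, accumulated weights are $e_1=\min(b,c)$, $e_{i+1}=\min(b,e_i+w_i)$; the run is $c$-feasible if all $e_i\ge 0$. An infinite run is Büchi accepted if every color in $\mathcal{M}$ occurs in the color sets of infinitely many of its transitions. Clocks: for a finite set $X$ of clocks, clock constraints $\Phi(X)$ are given by $\phi::=x\bowtie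 k\mid\phi_1\wedge\phi_2$ with $x\in X$, $k\in\mathbb{Z}$, ${\bowtie}\in\{\le,<,\ge,>,=\}$. A clock valuation is $v:X\to\mathbb{R}_{\ge0}$; $v_0(x)=0$ for all $x$; $(v+d)(x)=v(x)+d$; for $R\in(\mathbb{N}\cup\{\bot\})^X$, $v[R](x)=v(x)$ if $R(x)=\bot$ and $v[R](x)=R(x)$ otherwise. $v\models\phi$ means $\phi$ holds when each $x$ is replaced by $v(x)$. A WTBA is $A=(\Sigma,\mathcal{M},Q,q_0,X,I,E,r)$ with finite alphabet $\Sigma$, finite color set $\mathcal{M}$, finite location set $Q$, initial location $q_0$, finite clock set $X$, invariants $I:Q\to\Phi(X)$, finite edge set $E\subseteq Q\times\Sigma\times2^{\mathcal{M}}\times\Phi(X)\times(\mathbb{N}\cup\{\bot\})^X\times Q$ (edge $(q,\ell,M,g,R,q')$ with guard $g$ and reset $R$), and weight-rates $r:Q\to\mathbb{Z}$. Its semantics $[\![A]\!]$ is the WBA $(\Sigma\cup\mathbb{R}_{\ge0},\mathcal{M},S,s_0,T)$ with $S=\{(q,v): v\models I(q)\}$, $s_0=(q_0,v_0)$, and transitions: delays $(q,v)\xrightarrow{d,w}_\emptyset(q,v+d)$ for $(q,v)\in S$, $d\in\mathbb{R}_{\ge0}$ with $v+d'\models I(q)$ for all $d'\in[0,d]$, and $w=r(q)d$; switches $(q,v)\xrightarrow{\ell,0}_M(q',v')$ for each edge $(q,\ell,M,g,R,q')\in E$ with $v\models g$, $v'=v[R]$, $v'\models I(q')$. *)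

theory Defs
  imports Complex_Main "HOL-Library.Infinite_Set"
begin

datatype cmp = CLe | CLt | CGe | CGt | CEq

datatype 'c cc = CAtom 'c cmp int | CAnd "'c cc" "'c cc"

fun cmp_sem :: "cmp \<Rightarrow> real \<Rightarrow> real \<Rightarrow> bool" where
  "cmp_sem CLe a b = (a \<le> b)"
| "cmp_sem CLt a b = (a < b)"
| "cmp_sem CGe a b = (a \<ge> b)"
| "cmp_sem CGt a b = (a > b)"
| "cmp_sem CEq a b = (a = b)"

fun cc_sat :: "('c \<Rightarrow> real) \<Rightarrow> 'c cc \<Rightarrow> bool" where
  "cc_sat v (CAtom x r k) = cmp_sem r (v x) (real_of_int k)"
| "cc_sat v (CAnd p q) = (cc_sat v p \<and> cc_sat v q)"

fun cc_clocks :: "'c cc \<Rightarrow> 'c set" where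
  "cc_clocks (CAtom x r k) = {x}"
| "cc_clocks (CAnd p q) = cc_clocks p \<union> cc_clocks q"

fun cc_consts :: "'c cc \<Rightarrow> int set" where
  "cc_consts (CAtom x r k) = {k}"
| "cc_consts (CAnd p q) = cc_consts p \<union> cc_consts q"

text \<open>Resets: \<open>None\<close> plays the role of \<bottom>.\<close>
definition reset_val :: "('c \<Rightarrow> real) \<Rightarrow> ('c \<Rightarrow> nat option) \<Rightarrow> 'c \<Rightarrow> real" where
  "reset_val v R x = (case R x of None \<Rightarrow> v x | Some n \<Rightarrow> real n)"

record ('l, 'm, 'st) wba =
  wba_alph :: "'l set"
  wba_colors :: "'m set"
  wba_states :: "'st set"
  wba_init :: "'st"
  wba_trans :: "('st \<times> 'l \<times> 'm set \<times> real \<times> 'st) set"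

definition tr_src :: "'st \<times> 'l \<times> 'm set \<times> real \<times> 'st \<Rightarrow> 'st" where
  "tr_src t = (case t of (s, l, M, w, s') \<Rightarrow> s)"
definition tr_col :: "'st \<times> 'l \<times> 'm set \<times> real \<times> 'st \<Rightarrow> 'm set" where
  "tr_col t = (case t of (s, l, M, w, s') \<Rightarrow> M)"
definition tr_weight :: "'st \<times> 'l \<times> 'm set \<times> real \<times> 'st \<Rightarrow> real" where
  "tr_weight t = (case t of (s, l, M, w, s') \<Rightarrow> w)"
definition tr_tgt :: "'st \<times> 'l \<times> 'm set \<times> real \<times> 'st \<Rightarrow> 'st" where
  "tr_tgt t = (case t of (s, l, M, w, s') \<Rightarrow> s')"

definition inf_run :: "('l, 'm, 'st) wba \<Rightarrow> (nat \<Rightarrow> 'st \<times> 'l \<times> 'm set \<times> real \<times> 'st) \<Rightarrow> bool" where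
  "inf_run W \<rho> \<longleftrightarrow> (\<forall>i. \<rho> i \<in> wba_trans W) \<and> tr_src (\<rho> 0) = wba_init W
     \<and> (\<forall>i. tr_tgt (\<rho> i) = tr_src (\<rho> (Suc i)))"

text \<open>Accumulated weights with weak upper bound b and initial credit c;
  \<open>acc_weight b c \<rho> i\<close> is e_(i+1) of the paper.\<close>
fun acc_weight :: "nat \<Rightarrow> nat \<Rightarrow> (nat \<Rightarrow> 'st \<times> 'l \<times> 'm set \<times> real \<times> 'st) \<Rightarrow> nat \<Rightarrow> real" where
  "acc_weight b c \<rho> 0 = min (real b) (real c)"
| "acc_weight b c \<rho> (Suc i) = min (real b) (acc_weight b c \<rho> i + tr_weight (\<rho> i))"

definition feasible :: "nat \<Rightarrow> nat \<Rightarrow> (nat \<Rightarrow> 'st \<times> 'l \<times> 'm set \<times> real \<times> 'st) \<Rightarrow> bool" where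
  "feasible b c \<rho> \<longleftrightarrow> (\<forall>i. acc_weight b c \<rho> i \<ge> 0)"

definition buchi_acc :: "('l, 'm, 'st) wba \<Rightarrow> (nat \<Rightarrow> 'st \<times> 'l \<times> 'm set \<times> real \<times> 'st) \<Rightarrow> bool" where
  "buchi_acc W \<rho> \<longleftrightarrow> (\<forall>m \<in> wba_colors W. \<exists>\<^sub>\<infinity> i. m \<in> tr_col (\<rho> i))"

record ('s, 'm, 'q, 'c) wtba =
  ta_alph :: "'s set"
  ta_colors :: "'m set"
  ta_locs :: "'q set"
  ta_init :: "'q"
  ta_clocks :: "'c set"
  ta_inv :: "'q \<Rightarrow> 'c cc"
  ta_edges :: "('q \<times> 's \<times> 'm set \<times> 'c cc \<times> ('c \<Rightarrow> nat option) \<times> 'q) set"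
  ta_rate :: "'q \<Rightarrow> int"

definition wf_wtba :: "('s, 'm, 'q, 'c) wtba \<Rightarrow> bool" where
  "wf_wtba A \<longleftrightarrow> finite (ta_alph A) \<and> finite (ta_colors A) \<and> finite (ta_locs A)
    \<and> ta_init A \<in> ta_locs A \<and> finite (ta_clocks A)
    \<and> (\<forall>q \<in> ta_locs A. cc_clocks (ta_inv A q) \<subseteq> ta_clocks A)
    \<and> finite (ta_edges A)
    \<and> (\<forall>(q, l, M, g, R, q') \<in> ta_edges A. q \<in> ta_locs A \<and> l \<in> ta_alph A
          \<and> M \<subseteq> ta_colors A \<and> cc_clocks g \<subseteq> ta_clocks A
          \<and> (\<forall>x. x \<notin> ta_clocks A \<longrightarrow> R x = None) \<and> q' \<in> ta_locs A)"

definition ta_states :: "('s, 'm, 'q, 'c) wtba \<Rightarrow> ('q \<times> ('c \<Rightarrow> real)) set" where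
  "ta_states A = {(q, v). q \<in> ta_locs A \<and> (\<forall>x. 0 \<le> v x) \<and> cc_sat v (ta_inv A q)}"

text \<open>Letters of the semantics: \<open>Inl l\<close> for l in Sigma, \<open>Inr d\<close> for delays d.\<close>
definition ta_trans :: "('s, 'm, 'q, 'c) wtba \<Rightarrow>
    (('q \<times> ('c \<Rightarrow> real)) \<times> ('s + real) \<times> 'm set \<times> real \<times> ('q \<times> ('c \<Rightarrow> real))) set" where
  "ta_trans A =
     {((q, v), Inr d, {}, real_of_int (ta_rate A q) * d, (q, \<lambda>x. v x + d)) | q v d.
        (q, v) \<in> ta_states A \<and> 0 \<le> d \<and> (\<forall>d' \<in> {0..d}. cc_sat (\<lambda>x. v x + d') (ta_inv A q))}
   \<union> {((q, v), Inl l, M, 0, (q', reset_val v R)) | q v l M g R q'.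
        (q, l, M, g, R, q') \<in> ta_edges A \<and> (q, v) \<in> ta_states A \<and> cc_sat v g
        \<and> (q', reset_val v R) \<in> ta_states A}"

definition sem :: "('s, 'm, 'q, 'c) wtba \<Rightarrow> ('s + real, 'm, 'q \<times> ('c \<Rightarrow> real)) wba" where
  "sem A = \<lparr> wba_alph = Inl ` ta_alph A \<union> Inr ` {d. 0 \<le> d}, wba_colors = ta_colors A,
             wba_states = ta_states A, wba_init = (ta_init A, \<lambda>x. 0), wba_trans = ta_trans A \<rparr>"

text \<open>Maximal constant in invariants and guards (0 if there is none / all are negative).\<close>
definition max_const :: "('s, 'm, 'q, 'c) wtba \<Rightarrow> int" where
  "max_const A = Max ({0} \<union> (\<Union>q \<in> ta_locs A. cc_consts (ta_inv A q))
                        \<union> (\<Union>(q, l, M, g, R, q') \<in> ta_edges A. cc_consts g))"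

end

theory Submission
  imports Defs "HOL-Library.Omega_Words_Fun"
begin

text \<open>
  \<open>Abar\<close> strengthens every invariant by \<open>x \<le> K + 2\<close>, caps resets at \<open>K + 1\<close>, and adds at
  every location and for every clock \<open>y\<close> an \<open>\<epsilon>\<close>-loop with guard \<open>y \<ge> K + 1\<close> resetting \<open>y\<close>
  to \<open>K + 1\<close>; here \<open>K\<close> is any bound on the constants of \<open>A\<close>, e.g. \<open>N\<close>.
  Guards and invariants do not distinguish valuations that agree on every clock except where
  both values exceed \<open>K\<close>, and this relation is a simulation in both directions: an
  \<open>\<epsilon>\<close>-loop of \<open>Abar\<close> is answered by a zero delay of \<open>A\<close>, and a delay of \<open>A\<close> by pieces of
  length at most 1, each preceded by \<open>\<epsilon>\<close>-resets bringing the large clocks down to \<open>K + 1\<close>.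
  Every transition is matched by a nonempty path whose weights have one sign and the same sum,
  so the capped accumulated weights agree at matched positions and stay nonnegative in
  between; colours are matched as well, hence feasible Buechi-accepted runs transfer.
\<close>

section \<open>Paths and capped accumulated weights\<close>

lemma tr_simps [simp]:
  "tr_src (s, l, M, w, s') = s" "tr_tgt (s, l, M, w, s') = s'"
  "tr_weight (s, l, M, w, s') = w" "tr_col (s, l, M, w, s') = M"
  by (simp_all add: tr_src_def tr_tgt_def tr_weight_def tr_col_def)

type_synonym ('st, 'l, 'm) transition = "'st \<times> 'l \<times> 'm set \<times> real \<times> 'st"

fun trans_path :: "('st, 'l, 'm) transition set \<Rightarrow> 'st \<Rightarrow> ('st, 'l, 'm) transition list \<Rightarrow> 'st \<Rightarrow> bool"
  where
  "trans_path T s [] s' \<longleftrightarrow> s = s'"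
| "trans_path T s (t # ts) s' \<longleftrightarrow> t \<in> T \<and> tr_src t = s \<and> trans_path T (tr_tgt t) ts s'"

lemma trans_path_append [simp]:
  "trans_path T s (xs @ ys) s'' \<longleftrightarrow> (\<exists>s'. trans_path T s xs s' \<and> trans_path T s' ys s'')"
  by (induction xs arbitrary: s) auto

lemma trans_path_nth:
  assumes "trans_path T s ts s'" "j < length ts"
  shows "ts ! j \<in> T" "tr_src (ts ! j) = (s # map tr_tgt ts) ! j"
  using assms by (induction ts arbitrary: s j) (auto simp: nth_Cons split: nat.splits)

lemma trans_path_last:
  "trans_path T s ts s' \<Longrightarrow> last (s # map tr_tgt ts) = s'"
  by (induction ts arbitrary: s) auto

definition same_sign :: "real list \<Rightarrow> bool" where
  "same_sign ws \<longleftrightarrow> (\<forall>w \<in> set ws. 0 \<le> w) \<or> (\<forall>w \<in> set ws. w \<le> 0)"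

lemma same_sign_multiples:
  "\<forall>w \<in> set ws. \<exists>\<delta> \<ge> 0. w = \<sigma> * \<delta> \<Longrightarrow> same_sign ws"
  unfolding same_sign_def
  by (cases "0 \<le> \<sigma>") (auto simp: mult_nonpos_nonneg)

definition acc_list :: "nat \<Rightarrow> real \<Rightarrow> real list \<Rightarrow> real" where
  "acc_list b = foldl (\<lambda>e w. min (real b) (e + w))"

lemma acc_weight_add:
  "acc_weight b c \<rho> (n + j) = acc_list b (acc_weight b c \<rho> n) (map (\<lambda>k. tr_weight (\<rho> k)) [n..<n + j])"
  by (induction j) (auto simp: acc_list_def)

lemma acc_weight_le: "acc_weight b c \<rho> i \<le> real b"
  by (cases i) auto

lemma acc_list_same_sign:
  assumes "same_sign ws" "e \<le> real b"
  shows "acc_list b e ws = min (real b) (e + sum_list ws)"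
  using assms
proof (induction ws arbitrary: e)
  case (Cons w ws)
  then have "same_sign ws" by (auto simp: same_sign_def)
  with Cons.IH have IH: "acc_list b e (w # ws) = min (real b) (min (real b) (e + w) + sum_list ws)"
    by (simp add: acc_list_def)
  from Cons.prems(1) show ?case
    unfolding same_sign_def
  proof
    assume "\<forall>w \<in> set (w # ws). 0 \<le> w"
    then have "0 \<le> sum_list ws" by (auto intro: sum_list_nonneg)
    with IH show ?thesis by auto
  next
    assume "\<forall>w \<in> set (w # ws). w \<le> 0"
    with IH Cons.prems(2) show ?thesis by auto
  qed
qed (simp add: acc_list_def)

lemma acc_list_take_nonneg:
  assumes "same_sign ws" "0 \<le> e" "e \<le> real b" "0 \<le> e + sum_list ws"
  shows "0 \<le> acc_list b e (take j ws)"
proof -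
  have "same_sign (take j ws)"
    using assms(1) by (auto simp: same_sign_def dest: in_set_takeD)
  then have eq: "acc_list b e (take j ws) = min (real b) (e + sum_list (take j ws))"
    using assms(3) by (rule acc_list_same_sign)
  have split: "sum_list ws = sum_list (take j ws) + sum_list (drop j ws)"
    by (metis append_take_drop_id sum_list_append)
  from assms(1) have "0 \<le> e + sum_list (take j ws)"
    unfolding same_sign_def
  proof
    assume "\<forall>w \<in> set ws. 0 \<le> w"
    then have "0 \<le> sum_list (take j ws)" by (meson in_set_takeD sum_list_nonneg)
    then show ?thesis using assms(2) by linarith
  next
    assume "\<forall>w \<in> set ws. w \<le> 0"
    then have "sum_list (drop j ws) \<le> 0" by (auto intro: sum_list_nonpos dest: in_set_dropD)
    then show ?thesis using assms(4) split by linarith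
  qed
  then show ?thesis by (simp add: eq)
qed

section \<open>Matching runs of weighted Buechi automata\<close>

definition flat_offset :: "(nat \<Rightarrow> 'a list) \<Rightarrow> nat \<Rightarrow> nat" where
  "flat_offset L i = (\<Sum>k<i. length (L k))"

definition flat_word :: "(nat \<Rightarrow> 'a list) \<Rightarrow> nat \<Rightarrow> 'a" where
  "flat_word L = merge (\<lambda>i n. L i ! (n - flat_offset L i)) (flat_offset L)"

lemma flat_offset_Suc: "flat_offset L (Suc i) = flat_offset L i + length (L i)"
  by (simp add: flat_offset_def)

lemma idx_sequence_flat_offset: "\<forall>i. L i \<noteq> [] \<Longrightarrow> idx_sequence (flat_offset L)"
  by (simp add: idx_sequence_def flat_offset_Suc flat_offset_def)

lemma flat_word_nth:
  assumes "\<forall>i. L i \<noteq> []" "j < length (L i)"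
  shows "flat_word L (flat_offset L i + j) = L i ! j"
  unfolding flat_word_def
  by (subst merge[OF idx_sequence_flat_offset[OF assms(1)], where i = i])
    (use assms(2) in \<open>auto simp: flat_offset_Suc\<close>)

lemma flat_word_positionE:
  assumes "\<forall>i. L i \<noteq> []"
  obtains i j where "j < length (L i)" "n = flat_offset L i + j"
proof -
  obtain i where "n \<in> {flat_offset L i..<flat_offset L (Suc i)}"
    using idx_sequence_interval[OF idx_sequence_flat_offset[OF assms]] by blast
  then show thesis
    by (intro that[of "n - flat_offset L i" i]) (auto simp: flat_offset_Suc)
qed

lemma le_flat_offset: "\<forall>i. L i \<noteq> [] \<Longrightarrow> i \<le> flat_offset L i"
  by (rule strict_mono_imp_increasing)
    (use idx_sequence_flat_offset in \<open>auto simp: strict_mono_Suc_iff idx_sequence_def\<close>)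

lemma inf_run_flat_word:
  assumes ne: "\<forall>i. L i \<noteq> []"
    and path: "\<And>i. trans_path (wba_trans W) (St i) (L i) (St (Suc i))"
    and init: "St 0 = wba_init W"
  shows "inf_run W (flat_word L)"
  unfolding inf_run_def
proof (intro conjI allI)
  have "flat_word L 0 = L 0 ! 0"
    using flat_word_nth[OF ne, of 0 0] ne by (simp add: flat_offset_def)
  then show "tr_src (flat_word L 0) = wba_init W"
    using trans_path_nth(2)[OF path, of 0 0] ne init by simp
next
  fix n
  obtain i j where ij: "j < length (L i)" "n = flat_offset L i + j"
    using flat_word_positionE[OF ne] .
  have n: "flat_word L n = L i ! j"
    using flat_word_nth[OF ne ij(1)] ij(2) by simp
  then show "flat_word L n \<in> wba_trans W"
    using trans_path_nth(1)[OF path ij(1)] by simp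
  show "tr_tgt (flat_word L n) = tr_src (flat_word L (Suc n))"
  proof (cases "Suc j < length (L i)")
    case True
    then have "flat_word L (Suc n) = L i ! Suc j"
      using flat_word_nth[OF ne True] ij(2) by simp
    then show ?thesis
      using n trans_path_nth(2)[OF path True] True by simp
  next
    case False
    then have j: "j = length (L i) - 1" using ij(1) by simp
    have "Suc n = flat_offset L (Suc i) + 0"
      using ij False by (simp add: flat_offset_Suc)
    then have "flat_word L (Suc n) = L (Suc i) ! 0"
      using flat_word_nth[OF ne, of 0 "Suc i"] ne by simp
    then have "tr_src (flat_word L (Suc n)) = St (Suc i)"
      using trans_path_nth(2)[OF path, of 0 "Suc i"] ne by simp
    moreover have "tr_tgt (last (L i)) = St (Suc i)"
      using trans_path_last[OF path, of i] ne by (simp add: last_map)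
    moreover have "last (L i) = L i ! j"
      using ne j by (simp add: last_conv_nth)
    ultimately show ?thesis using n by simp
  qed
qed

lemma feasible_flat_word:
  assumes ne: "\<forall>i. L i \<noteq> []"
    and sign: "\<And>i. same_sign (map tr_weight (L i))"
    and sum: "\<And>i. sum_list (map tr_weight (L i)) = tr_weight (\<rho> i)"
    and feas: "feasible b c \<rho>"
  shows "feasible b c (flat_word L)"
proof -
  let ?ws = "\<lambda>i. map tr_weight (L i)"
  have segment: "acc_weight b c (flat_word L) (flat_offset L i + j)
      = acc_list b (acc_weight b c (flat_word L) (flat_offset L i)) (take j (?ws i))"
    if "j \<le> length (L i)" for i j
  proof -
    have "map (\<lambda>k. tr_weight (flat_word L k)) [flat_offset L i..<flat_offset L i + j] = take j (?ws i)"
      using that by (intro nth_equalityI) (auto simp: flat_word_nth[OF ne])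
    then show ?thesis by (simp add: acc_weight_add)
  qed
  have offset: "acc_weight b c (flat_word L) (flat_offset L i) = acc_weight b c \<rho> i" for i
  proof (induction i)
    case 0
    then show ?case by (simp add: flat_offset_def)
  next
    case (Suc i)
    have "acc_weight b c (flat_word L) (flat_offset L (Suc i)) = acc_list b (acc_weight b c \<rho> i) (?ws i)"
      using segment[of "length (L i)" i] Suc by (simp add: flat_offset_Suc)
    also have "\<dots> = acc_weight b c \<rho> (Suc i)"
      using acc_list_same_sign[OF sign acc_weight_le] sum by simp
    finally show ?case .
  qed
  show ?thesis
    unfolding feasible_def
  proof
    fix n
    obtain i j where ij: "j < length (L i)" "n = flat_offset L i + j"
      using flat_word_positionE[OF ne] .
    have "0 \<le> acc_weight b c \<rho> i" "0 \<le> acc_weight b c \<rho> (Suc i)"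
      using feas unfolding feasible_def by blast+
    then have "0 \<le> acc_list b (acc_weight b c \<rho> i) (take j (?ws i))"
      by (intro acc_list_take_nonneg[OF sign _ acc_weight_le]) (simp_all add: sum)
    then show "0 \<le> acc_weight b c (flat_word L) n"
      using segment[of j i] ij offset by simp
  qed
qed

lemma buchi_acc_flat_word:
  assumes ne: "\<forall>i. L i \<noteq> []"
    and col: "\<And>i. tr_col (\<rho> i) \<subseteq> (\<Union>u \<in> set (L i). tr_col u)"
    and colors: "wba_colors W' = wba_colors W"
    and acc: "buchi_acc W \<rho>"
  shows "buchi_acc W' (flat_word L)"
  unfolding buchi_acc_def INFM_nat
proof (intro ballI allI)
  fix m k
  assume "m \<in> wba_colors W'"
  then have "\<exists>\<^sub>\<infinity> i. m \<in> tr_col (\<rho> i)"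
    using acc colors unfolding buchi_acc_def by auto
  then obtain i where i: "k < i" "m \<in> tr_col (\<rho> i)"
    unfolding INFM_nat by blast
  then obtain u where u: "u \<in> set (L i)" "m \<in> tr_col u"
    using col by blast
  then obtain j where j: "j < length (L i)" "L i ! j = u"
    by (meson in_set_conv_nth)
  have "k < flat_offset L i + j"
    using le_flat_offset[OF ne, of i] i(1) by simp
  then show "\<exists>n > k. m \<in> tr_col (flat_word L n)"
    using j u flat_word_nth[OF ne j(1)] by auto
qed

definition matching_path :: "('st, 'l, 'm) transition set \<Rightarrow> ('st0 \<Rightarrow> 'st \<Rightarrow> bool)
    \<Rightarrow> ('st0, 'l0, 'm) transition \<Rightarrow> 'st \<Rightarrow> ('st, 'l, 'm) transition list \<Rightarrow> 'st \<Rightarrow> bool"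
  where
  "matching_path T S t s ts s' \<longleftrightarrow> ts \<noteq> [] \<and> trans_path T s ts s' \<and> S (tr_tgt t) s'
     \<and> same_sign (map tr_weight ts) \<and> sum_list (map tr_weight ts) = tr_weight t
     \<and> tr_col t \<subseteq> (\<Union>u \<in> set ts. tr_col u)"

lemma accepted_feasible_run_simulation:
  assumes colors: "wba_colors WB = wba_colors WA"
    and init: "S (wba_init WA) (wba_init WB)"
    and step: "\<And>t s. t \<in> wba_trans WA \<Longrightarrow> S (tr_src t) s
       \<Longrightarrow> \<exists>ts s'. matching_path (wba_trans WB) S t s ts s'"
    and run: "inf_run WA \<rho>" "feasible b c \<rho>" "buchi_acc WA \<rho>"
  shows "\<exists>\<rho>'. inf_run WB \<rho>' \<and> feasible b c \<rho>' \<and> buchi_acc WB \<rho>'"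
proof -
  have "\<forall>t s. \<exists>r. t \<in> wba_trans WA \<longrightarrow> S (tr_src t) s
      \<longrightarrow> matching_path (wba_trans WB) S t s (fst r) (snd r)"
    using step by fastforce
  then obtain F where F: "\<And>t s. t \<in> wba_trans WA \<Longrightarrow> S (tr_src t) s
      \<Longrightarrow> matching_path (wba_trans WB) S t s (fst (F t s)) (snd (F t s))"
    unfolding choice_iff by blast
  define St where "St = rec_nat (wba_init WB) (\<lambda>i s. snd (F (\<rho> i) s))"
  define L where "L i = fst (F (\<rho> i) (St i))" for i
  have trans: "\<And>i. \<rho> i \<in> wba_trans WA"
    using run(1) by (simp add: inf_run_def)
  have match: "matching_path (wba_trans WB) S (\<rho> i) (St i) (L i) (St (Suc i))" for i
  proof -
    have "S (tr_src (\<rho> i)) (St i)"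
    proof (induction i)
      case 0
      then show ?case using run(1) init by (simp add: inf_run_def St_def)
    next
      case (Suc i)
      then have "S (tr_tgt (\<rho> i)) (St (Suc i))"
        using F[OF trans] by (simp add: St_def matching_path_def)
      then show ?case using run(1) by (simp add: inf_run_def)
    qed
    then show ?thesis using F[OF trans] by (simp add: St_def L_def)
  qed
  then have ne: "\<forall>i. L i \<noteq> []" by (simp add: matching_path_def)
  have "inf_run WB (flat_word L)"
    using match by (intro inf_run_flat_word[OF ne, where St = St]) (auto simp: matching_path_def St_def)
  moreover have "feasible b c (flat_word L)"
    using match by (intro feasible_flat_word[OF ne _ _ run(2)]) (auto simp: matching_path_def)
  moreover have "buchi_acc WB (flat_word L)"
    using match by (intro buchi_acc_flat_word[OF ne _ colors run(3)]) (auto simp: matching_path_def)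
  ultimately show ?thesis by blast
qed

section \<open>Semantics of timed automata and clock equivalence\<close>

lemma ta_trans_delayI:
  assumes "(q, v) \<in> ta_states B" "0 \<le> d" "\<forall>d' \<in> {0..d}. cc_sat (\<lambda>x. v x + d') (ta_inv B q)"
  shows "((q, v), Inr d, {}, real_of_int (ta_rate B q) * d, (q, \<lambda>x. v x + d)) \<in> ta_trans B"
  using assms unfolding ta_trans_def by blast

lemma ta_trans_edgeI:
  assumes "(q, l, M, g, R, q') \<in> ta_edges B" "(q, v) \<in> ta_states B" "cc_sat v g"
    "(q', reset_val v R) \<in> ta_states B"
  shows "((q, v), Inl l, M, 0, (q', reset_val v R)) \<in> ta_trans B"
  using assms unfolding ta_trans_def by blast

lemma ta_trans_cases:
  assumes "t \<in> ta_trans B"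
  obtains (delay) q v d
    where "t = ((q, v), Inr d, {}, real_of_int (ta_rate B q) * d, (q, \<lambda>x. v x + d))"
      "(q, v) \<in> ta_states B" "0 \<le> d" "\<forall>d' \<in> {0..d}. cc_sat (\<lambda>x. v x + d') (ta_inv B q)"
  | (edge) q v l M g R q'
    where "t = ((q, v), Inl l, M, 0, (q', reset_val v R))" "(q, l, M, g, R, q') \<in> ta_edges B"
      "(q, v) \<in> ta_states B" "cc_sat v g" "(q', reset_val v R) \<in> ta_states B"
  using assms unfolding ta_trans_def by blast

lemma ta_states_delay:
  assumes "(q, v) \<in> ta_states B" "0 \<le> d" "\<forall>d' \<in> {0..d}. cc_sat (\<lambda>x. v x + d') (ta_inv B q)"
  shows "(q, \<lambda>x. v x + d) \<in> ta_states B"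
  using assms by (auto simp: ta_states_def)

lemma ta_trans_src_state: "t \<in> ta_trans B \<Longrightarrow> tr_src t \<in> ta_states B"
  by (erule ta_trans_cases) auto

lemma inf_run_sem_init_state: "inf_run (sem B) \<rho> \<Longrightarrow> (ta_init B, \<lambda>x. 0) \<in> ta_states B"
  using ta_trans_src_state[of "\<rho> 0" B] by (simp add: inf_run_def sem_def)

lemma reset_val_nonneg: "\<forall>x. 0 \<le> v x \<Longrightarrow> 0 \<le> reset_val v R x"
  by (auto simp: reset_val_def split: option.splits)

lemma reset_val_single [simp]: "reset_val v [y \<mapsto> n] = v(y := real n)"
  by (auto simp: reset_val_def)

definition clock_equiv :: "nat \<Rightarrow> 'c set \<Rightarrow> ('c \<Rightarrow> real) \<Rightarrow> ('c \<Rightarrow> real) \<Rightarrow> bool" where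
  "clock_equiv K X v w \<longleftrightarrow> (\<forall>x \<in> X. v x = w x \<or> (real K < v x \<and> real K < w x))"

lemma cc_sat_clock_equiv:
  assumes "clock_equiv K X v w" "cc_clocks \<phi> \<subseteq> X" "\<forall>k \<in> cc_consts \<phi>. k \<le> int K"
  shows "cc_sat v \<phi> \<longleftrightarrow> cc_sat w \<phi>"
  using assms
proof (induction \<phi>)
  case (CAtom x r k)
  then have "real_of_int k \<le> real K" "v x = w x \<or> (real K < v x \<and> real K < w x)"
    by (auto simp: clock_equiv_def)
  then show ?case by (cases r) auto
qed simp

lemma clock_equiv_shift:
  "clock_equiv K X v w \<Longrightarrow> 0 \<le> d \<Longrightarrow> clock_equiv K X (\<lambda>x. v x + d) (\<lambda>x. w x + d)"
  unfolding clock_equiv_def by force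

definition cap_reset :: "nat \<Rightarrow> ('c \<Rightarrow> nat option) \<Rightarrow> 'c \<Rightarrow> nat option" where
  "cap_reset n R x = map_option (min n) (R x)"

lemma clock_equiv_cap_reset:
  "clock_equiv K X v w \<Longrightarrow> clock_equiv K X (reset_val v R) (reset_val w (cap_reset (K + 1) R))"
  by (auto simp: clock_equiv_def reset_val_def cap_reset_def split: option.splits)

lemma clock_equiv_reset_above:
  "clock_equiv K X v w \<Longrightarrow> real K + 1 \<le> w y \<Longrightarrow> clock_equiv K X v (w(y := real K + 1))"
  unfolding clock_equiv_def by force

section \<open>The clock-bounded automaton\<close>

definition cc_bounded :: "nat \<Rightarrow> 'c list \<Rightarrow> 'c cc \<Rightarrow> 'c cc" where
  "cc_bounded B xs \<phi> = foldr (\<lambda>x. CAnd (CAtom x CLe (int B))) xs \<phi>"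

lemma cc_sat_cc_bounded [simp]:
  "cc_sat w (cc_bounded B xs \<phi>) \<longleftrightarrow> (\<forall>x \<in> set xs. w x \<le> real B) \<and> cc_sat w \<phi>"
  by (induction xs) (auto simp: cc_bounded_def)

lemma cc_clocks_cc_bounded [simp]: "cc_clocks (cc_bounded B xs \<phi>) = set xs \<union> cc_clocks \<phi>"
  by (induction xs) (auto simp: cc_bounded_def)

definition clock_list :: "('s, 'm, 'q, 'c) wtba \<Rightarrow> 'c list" where
  "clock_list A = (SOME xs. set xs = ta_clocks A)"

lemma set_clock_list: "finite (ta_clocks A) \<Longrightarrow> set (clock_list A) = ta_clocks A"
  unfolding clock_list_def by (rule someI_ex) (rule finite_list)

text \<open>The letter \<open>None\<close> plays the role of the new letter \<open>\<epsilon>\<close>.\<close>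
definition bounded_wtba :: "nat \<Rightarrow> ('s, 'm, 'q, 'c) wtba \<Rightarrow> ('s option, 'm, 'q, 'c) wtba" where
  "bounded_wtba K A =
     \<lparr> ta_alph = Some ` ta_alph A \<union> {None}, ta_colors = ta_colors A, ta_locs = ta_locs A,
       ta_init = ta_init A, ta_clocks = ta_clocks A,
       ta_inv = (\<lambda>q. cc_bounded (K + 2) (clock_list A) (ta_inv A q)),
       ta_edges = (\<lambda>(q, l, M, g, R, q'). (q, Some l, M, g, cap_reset (K + 1) R, q')) ` ta_edges A
         \<union> (\<lambda>(q, y). (q, None, {}, CAtom y CGe (int K + 1), [y \<mapsto> K + 1], q)) ` (ta_locs A \<times> ta_clocks A),
       ta_rate = ta_rate A \<rparr>"

lemma bounded_wtba_simps [simp]: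
  "ta_alph (bounded_wtba K A) = Some ` ta_alph A \<union> {None}"
  "ta_colors (bounded_wtba K A) = ta_colors A"
  "ta_locs (bounded_wtba K A) = ta_locs A"
  "ta_init (bounded_wtba K A) = ta_init A"
  "ta_clocks (bounded_wtba K A) = ta_clocks A"
  "ta_inv (bounded_wtba K A) q = cc_bounded (K + 2) (clock_list A) (ta_inv A q)"
  "ta_rate (bounded_wtba K A) = ta_rate A"
  by (simp_all add: bounded_wtba_def)

lemma ta_edges_bounded_wtbaE:
  assumes "(q, a, M, g, R', q') \<in> ta_edges (bounded_wtba K A)"
  obtains (lifted) l R where "(q, l, M, g, R, q') \<in> ta_edges A" "a = Some l" "R' = cap_reset (K + 1) R"
  | (eps) y where "q \<in> ta_locs A" "y \<in> ta_clocks A" "a = None" "M = {}"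
      "g = CAtom y CGe (int K + 1)" "R' = [y \<mapsto> K + 1]" "q' = q"
  using assms by (auto simp: bounded_wtba_def)

lemma lifted_edge_bounded_wtba:
  "(q, l, M, g, R, q') \<in> ta_edges A
    \<Longrightarrow> (q, Some l, M, g, cap_reset (K + 1) R, q') \<in> ta_edges (bounded_wtba K A)"
  by (force simp: bounded_wtba_def)

lemma eps_edge_bounded_wtba:
  "q \<in> ta_locs A \<Longrightarrow> y \<in> ta_clocks A
    \<Longrightarrow> (q, None, {}, CAtom y CGe (int K + 1), [y \<mapsto> K + 1], q) \<in> ta_edges (bounded_wtba K A)"
  by (auto simp: bounded_wtba_def)

lemma ta_states_bounded_wtba:
  assumes "finite (ta_clocks A)"
  shows "(q, w) \<in> ta_states (bounded_wtba K A)
    \<longleftrightarrow> (q, w) \<in> ta_states A \<and> (\<forall>x \<in> ta_clocks A. w x \<le> real K + 2)"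
  using assms by (auto simp: ta_states_def set_clock_list)

lemma wf_bounded_wtba:
  assumes "wf_wtba A"
  shows "wf_wtba (bounded_wtba K A)"
proof -
  have edge: "q \<in> ta_locs A \<and> l \<in> Some ` ta_alph A \<union> {None} \<and> M \<subseteq> ta_colors A
      \<and> cc_clocks g \<subseteq> ta_clocks A \<and> (\<forall>x. x \<notin> ta_clocks A \<longrightarrow> R x = None) \<and> q' \<in> ta_locs A"
    if "(q, l, M, g, R, q') \<in> ta_edges (bounded_wtba K A)" for q l M g R q'
    using that
  proof (cases rule: ta_edges_bounded_wtbaE)
    case (lifted l R)
    then show ?thesis using assms by (fastforce simp: wf_wtba_def cap_reset_def)
  qed auto
  have "finite (ta_edges (bounded_wtba K A))"
    using assms by (simp add: wf_wtba_def bounded_wtba_def)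
  moreover have "\<forall>(q, l, M, g, R, q') \<in> ta_edges (bounded_wtba K A). q \<in> ta_locs A
      \<and> l \<in> Some ` ta_alph A \<union> {None} \<and> M \<subseteq> ta_colors A \<and> cc_clocks g \<subseteq> ta_clocks A
      \<and> (\<forall>x. x \<notin> ta_clocks A \<longrightarrow> R x = None) \<and> q' \<in> ta_locs A"
    using edge by blast
  ultimately show ?thesis
    using assms by (simp add: wf_wtba_def set_clock_list)
qed

lemma finite_cc_consts [simp]: "finite (cc_consts \<phi>)"
  by (induction \<phi>) auto

lemma finite_max_const_set:
  "wf_wtba A \<Longrightarrow> finite ({0} \<union> (\<Union>q \<in> ta_locs A. cc_consts (ta_inv A q))
    \<union> (\<Union>(q, l, M, g, R, q') \<in> ta_edges A. cc_consts g))"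
  by (auto simp: wf_wtba_def split: prod.splits)

lemma max_const_nonneg: "wf_wtba A \<Longrightarrow> 0 \<le> max_const A"
  unfolding max_const_def by (rule Max_ge[OF finite_max_const_set]) auto

lemma inv_const_le_max_const:
  "wf_wtba A \<Longrightarrow> q \<in> ta_locs A \<Longrightarrow> k \<in> cc_consts (ta_inv A q) \<Longrightarrow> k \<le> max_const A"
  unfolding max_const_def by (rule Max_ge[OF finite_max_const_set]) auto

lemma guard_const_le_max_const:
  "wf_wtba A \<Longrightarrow> (q, l, M, g, R, q') \<in> ta_edges A \<Longrightarrow> k \<in> cc_consts g \<Longrightarrow> k \<le> max_const A"
  unfolding max_const_def
  by (rule Max_ge[OF finite_max_const_set]) (auto intro!: bexI[of _ "(q, l, M, g, R, q')"])

section \<open>Simulation between an automaton and its clock-bounded version\<close>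

locale clock_bounding =
  fixes A :: "('s, 'm, 'q, 'c) wtba" and K :: nat
  assumes wf: "wf_wtba A"
    and max_const_le: "max_const A \<le> int K"
begin

abbreviation Abar :: "('s option, 'm, 'q, 'c) wtba" where
  "Abar \<equiv> bounded_wtba K A"

abbreviation clocks_equiv :: "('c \<Rightarrow> real) \<Rightarrow> ('c \<Rightarrow> real) \<Rightarrow> bool" where
  "clocks_equiv \<equiv> clock_equiv K (ta_clocks A)"

definition sim :: "'q \<times> ('c \<Rightarrow> real) \<Rightarrow> 'q \<times> ('c \<Rightarrow> real) \<Rightarrow> bool" where
  "sim s s' \<longleftrightarrow> fst s = fst s' \<and> s \<in> ta_states A \<and> s' \<in> ta_states Abar \<and> clocks_equiv (snd s) (snd s')"

lemma finite_clocks: "finite (ta_clocks A)"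
  using wf by (simp add: wf_wtba_def)

lemma set_clock_list_A [simp]: "set (clock_list A) = ta_clocks A"
  using set_clock_list[OF finite_clocks] .

lemma ta_states_Abar:
  "(q, w) \<in> ta_states Abar \<longleftrightarrow> (q, w) \<in> ta_states A \<and> (\<forall>x \<in> ta_clocks A. w x \<le> real K + 2)"
  using ta_states_bounded_wtba[OF finite_clocks] .

lemma inv_sat_equiv:
  assumes "q \<in> ta_locs A" "clocks_equiv v w"
  shows "cc_sat v (ta_inv A q) \<longleftrightarrow> cc_sat w (ta_inv A q)"
proof (rule cc_sat_clock_equiv[OF assms(2)])
  show "cc_clocks (ta_inv A q) \<subseteq> ta_clocks A"
    using wf assms(1) by (simp add: wf_wtba_def)
  show "\<forall>k \<in> cc_consts (ta_inv A q). k \<le> int K"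
    using inv_const_le_max_const[OF wf assms(1)] max_const_le by force
qed

lemma guard_sat_equiv:
  assumes "(q, l, M, g, R, q') \<in> ta_edges A" "clocks_equiv v w"
  shows "cc_sat v g \<longleftrightarrow> cc_sat w g"
proof (rule cc_sat_clock_equiv[OF assms(2)])
  show "cc_clocks g \<subseteq> ta_clocks A"
    using wf assms(1) unfolding wf_wtba_def by fastforce
  show "\<forall>k \<in> cc_consts g. k \<le> int K"
    using guard_const_le_max_const[OF wf assms(1)] max_const_le by force
qed

lemma ta_states_A_equiv:
  "(q, w) \<in> ta_states Abar \<Longrightarrow> clocks_equiv v w \<Longrightarrow> \<forall>x. 0 \<le> v x \<Longrightarrow> (q, v) \<in> ta_states A"
  using inv_sat_equiv by (auto simp: ta_states_def)

lemma sim_equivI: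
  assumes "(q, v) \<in> ta_states A" "clocks_equiv v w" "\<forall>x. 0 \<le> w x" "\<forall>x \<in> ta_clocks A. w x \<le> real K + 2"
  shows "sim (q, v) (q, w)"
  using assms inv_sat_equiv by (auto simp: sim_def ta_states_Abar ta_states_def)

definition realizes_delay :: "'q \<Rightarrow> real \<Rightarrow> ('q \<times> ('c \<Rightarrow> real), 'l, 'm) transition list \<Rightarrow> bool"
  where
  "realizes_delay q d ts \<longleftrightarrow>
     (\<forall>u \<in> set ts. tr_col u = {} \<and> (\<exists>\<delta> \<ge> 0. tr_weight u = real_of_int (ta_rate A q) * \<delta>))
     \<and> sum_list (map tr_weight ts) = real_of_int (ta_rate A q) * d"

lemma realizes_delay_same_sign: "realizes_delay q d ts \<Longrightarrow> same_sign (map tr_weight ts)"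
  unfolding realizes_delay_def by (intro same_sign_multiples) auto

lemma realizes_delay_append:
  "realizes_delay q d ts \<Longrightarrow> realizes_delay q d' ts' \<Longrightarrow> realizes_delay q (d + d') (ts @ ts')"
  by (auto simp: realizes_delay_def distrib_left)

lemma realizes_delay_single:
  "0 \<le> d \<Longrightarrow> realizes_delay q d [(s, a, {}, real_of_int (ta_rate A q) * d, s')]"
  by (auto simp: realizes_delay_def)

lemma eps_path_normalize:
  assumes "set ys \<subseteq> ta_clocks A" "sim (q, v) (q, w)"
  shows "\<exists>ts w'. trans_path (ta_trans Abar) (q, w) ts (q, w') \<and> realizes_delay q 0 ts
    \<and> sim (q, v) (q, w') \<and> (\<forall>x \<in> set ys. w' x \<le> real K + 1)"
  using assms(1)
proof (induction ys)
  case Nil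
  show ?case using assms(2) by (intro exI[of _ "[]"] exI[of _ w]) (auto simp: realizes_delay_def)
next
  case (Cons y ys)
  then obtain ts w1 where ts: "trans_path (ta_trans Abar) (q, w) ts (q, w1)" "realizes_delay q 0 ts"
      "sim (q, v) (q, w1)" "\<forall>x \<in> set ys. w1 x \<le> real K + 1"
    by auto
  show ?case
  proof (cases "w1 y \<le> real K + 1")
    case True
    then show ?thesis using ts by auto
  next
    case False
    define w2 where "w2 = w1(y := real K + 1)"
    have y: "y \<in> ta_clocks A" using Cons.prems by simp
    have states: "(q, v) \<in> ta_states A" "(q, w1) \<in> ta_states Abar" and "clocks_equiv v w1"
      using ts(3) by (auto simp: sim_def)
    then have sim2: "sim (q, v) (q, w2)"
      unfolding w2_def using False
      by (intro sim_equivI clock_equiv_reset_above) (auto simp: ta_states_Abar ta_states_def)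
    have "q \<in> ta_locs A" using states(1) by (simp add: ta_states_def)
    then have "((q, w1), Inl None, {}, 0, (q, w2)) \<in> ta_trans Abar"
      using ta_trans_edgeI[OF eps_edge_bounded_wtba states(2), of y] y False sim2
      by (simp add: w2_def sim_def add.commute)
    moreover have "realizes_delay q 0 [((q, w1), Inl None, {}, 0, (q, w2))]"
      by (auto simp: realizes_delay_def)
    moreover have "\<forall>x \<in> set (y # ys). w2 x \<le> real K + 1"
      using ts(4) by (simp add: w2_def)
    ultimately show ?thesis
      using ts sim2 realizes_delay_append[OF ts(2)]
      by (intro exI[of _ "ts @ [((q, w1), Inl None, {}, 0, (q, w2))]"] exI[of _ w2]) auto
  qed
qed

lemma short_delay_path:
  assumes sim: "sim (q, v) (q, w)" and d: "0 \<le> d" "d \<le> 1"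
    and inv: "\<forall>d' \<in> {0..d}. cc_sat (\<lambda>x. v x + d') (ta_inv A q)"
  shows "\<exists>ts w'. ts \<noteq> [] \<and> trans_path (ta_trans Abar) (q, w) ts (q, w') \<and> realizes_delay q d ts
    \<and> sim (q, \<lambda>x. v x + d) (q, w')"
proof -
  obtain ts w0 where ts: "trans_path (ta_trans Abar) (q, w) ts (q, w0)" "realizes_delay q 0 ts"
      "sim (q, v) (q, w0)" "\<forall>x \<in> ta_clocks A. w0 x \<le> real K + 1"
    using eps_path_normalize[of "clock_list A" q v w] sim by auto
  have q: "q \<in> ta_locs A" and vA: "(q, v) \<in> ta_states A" and w0: "(q, w0) \<in> ta_states Abar"
    and eq: "clocks_equiv v w0"
    using ts(3) by (auto simp: sim_def ta_states_def)
  have inv0: "\<forall>d' \<in> {0..d}. cc_sat (\<lambda>x. w0 x + d') (ta_inv Abar q)"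
  proof
    fix d' assume d': "d' \<in> {0..d}"
    then have "cc_sat (\<lambda>x. w0 x + d') (ta_inv A q)"
      using inv inv_sat_equiv[OF q clock_equiv_shift[OF eq]] by auto
    moreover have "\<forall>x \<in> ta_clocks A. w0 x + d' \<le> real K + 2"
      using ts(4) d' d(2) by fastforce
    ultimately show "cc_sat (\<lambda>x. w0 x + d') (ta_inv Abar q)" by (simp add: add.commute)
  qed
  let ?t = "((q, w0), Inr d, {}, real_of_int (ta_rate A q) * d, (q, \<lambda>x. w0 x + d))"
  have "?t \<in> ta_trans Abar"
    using ta_trans_delayI[OF w0 d(1) inv0] by simp
  moreover have "sim (q, \<lambda>x. v x + d) (q, \<lambda>x. w0 x + d)"
    using ta_states_delay[OF vA d(1) inv] ta_states_delay[OF w0 d(1) inv0]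
      clock_equiv_shift[OF eq d(1)]
    by (simp add: sim_def)
  ultimately show ?thesis
    using ts realizes_delay_append[OF ts(2) realizes_delay_single[OF d(1)]]
    by (intro exI[of _ "ts @ [?t]"] exI[of _ "\<lambda>x. w0 x + d"]) auto
qed

lemma delay_path:
  assumes "sim (q, v) (q, w)" "0 \<le> d" "\<forall>d' \<in> {0..d}. cc_sat (\<lambda>x. v x + d') (ta_inv A q)"
  shows "\<exists>ts w'. ts \<noteq> [] \<and> trans_path (ta_trans Abar) (q, w) ts (q, w') \<and> realizes_delay q d ts
    \<and> sim (q, \<lambda>x. v x + d) (q, w')"
proof -
  obtain n :: nat where "d \<le> n"
    using real_arch_simple by blast
  then show ?thesis
    using assms
  proof (induction n arbitrary: d v w)
    case 0
    then show ?case using short_delay_path[of q v w d] by simp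
  next
    case (Suc n)
    show ?case
    proof (cases "d \<le> 1")
      case True
      then show ?thesis using short_delay_path Suc.prems by blast
    next
      case False
      then obtain ts1 w1 where ts1: "ts1 \<noteq> []" "trans_path (ta_trans Abar) (q, w) ts1 (q, w1)"
          "realizes_delay q 1 ts1" "sim (q, \<lambda>x. v x + 1) (q, w1)"
        using short_delay_path[OF Suc.prems(2), of 1] Suc.prems(4) by auto
      have "\<forall>d' \<in> {0..d - 1}. cc_sat (\<lambda>x. v x + 1 + d') (ta_inv A q)"
        using Suc.prems(4) by (auto simp: add.assoc)
      then obtain ts2 w2 where ts2: "ts2 \<noteq> []" "trans_path (ta_trans Abar) (q, w1) ts2 (q, w2)"
          "realizes_delay q (d - 1) ts2" "sim (q, \<lambda>x. v x + 1 + (d - 1)) (q, w2)"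
        using Suc.IH[of "d - 1" "\<lambda>x. v x + 1" w1] Suc.prems(1) False ts1(4) by auto
      show ?thesis
        using ts1 ts2 realizes_delay_append[OF ts1(3) ts2(3)]
        by (intro exI[of _ "ts1 @ ts2"] exI[of _ w2]) auto
    qed
  qed
qed

lemma sim_step_forward:
  assumes t: "t \<in> ta_trans A" and s: "sim (tr_src t) s"
  shows "\<exists>ts s'. matching_path (ta_trans Abar) sim t s ts s'"
  using t
proof (cases rule: ta_trans_cases)
  case (delay q v d)
  obtain w where "s = (q, w)"
    using s delay by (cases s) (auto simp: sim_def)
  with delay s obtain ts w' where "ts \<noteq> []" "trans_path (ta_trans Abar) s ts (q, w')"
      "realizes_delay q d ts" "sim (q, \<lambda>x. v x + d) (q, w')"
    using delay_path[of q v w d] by auto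
  then show ?thesis
    using delay realizes_delay_same_sign by (intro exI) (auto simp: matching_path_def realizes_delay_def)
next
  case (edge q v l M g R q')
  obtain w where s_eq: "s = (q, w)"
    using s edge by (cases s) (auto simp: sim_def)
  have w: "(q, w) \<in> ta_states Abar" "clocks_equiv v w"
    using s edge s_eq by (auto simp: sim_def)
  define w' where "w' = reset_val w (cap_reset (K + 1) R)"
  have sat: "cc_sat w g"
    using guard_sat_equiv[OF edge(2) w(2)] edge(4) by simp
  have sim': "sim (q', reset_val v R) (q', w')"
    unfolding w'_def
  proof (rule sim_equivI[OF edge(5) clock_equiv_cap_reset[OF w(2)]])
    show "\<forall>x. 0 \<le> reset_val w (cap_reset (K + 1) R) x"
      using w(1) by (auto simp: ta_states_def intro: reset_val_nonneg)
    show "\<forall>x \<in> ta_clocks A. reset_val w (cap_reset (K + 1) R) x \<le> real K + 2"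
      using w(1) by (auto simp: ta_states_Abar reset_val_def cap_reset_def split: option.splits)
  qed
  let ?t = "((q, w), Inl (Some l), M, 0, (q', w'))"
  have "?t \<in> ta_trans Abar"
    unfolding w'_def
    by (rule ta_trans_edgeI[OF lifted_edge_bounded_wtba[OF edge(2)] w(1) sat])
      (use sim' in \<open>simp add: sim_def w'_def\<close>)
  then show ?thesis
    using sim' edge s_eq
    by (intro exI[of _ "[?t]"] exI[of _ "(q', w')"]) (auto simp: matching_path_def same_sign_def)
qed

lemma sim_step_backward:
  assumes t: "t \<in> ta_trans Abar" and s: "sim s (tr_src t)"
  shows "\<exists>ts s'. matching_path (ta_trans A) (\<lambda>s' s. sim s s') t s ts s'"
  using t
proof (cases rule: ta_trans_cases)
  case (delay q w d)
  obtain v where s_eq: "s = (q, v)"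
    using s delay by (cases s) (auto simp: sim_def)
  have v: "(q, v) \<in> ta_states A" "clocks_equiv v w" and q: "q \<in> ta_locs A"
    using s delay s_eq by (auto simp: sim_def ta_states_def)
  have inv: "\<forall>d' \<in> {0..d}. cc_sat (\<lambda>x. v x + d') (ta_inv A q)"
    using delay(4) inv_sat_equiv[OF q clock_equiv_shift[OF v(2)]] by auto
  let ?t = "((q, v), Inr d, {}, real_of_int (ta_rate A q) * d, (q, \<lambda>x. v x + d))"
  have "?t \<in> ta_trans A"
    by (rule ta_trans_delayI[OF v(1) delay(3) inv])
  moreover have "sim (q, \<lambda>x. v x + d) (q, \<lambda>x. w x + d)"
    using ta_states_delay[OF v(1) delay(3) inv] ta_states_delay[OF delay(2-4)]
      clock_equiv_shift[OF v(2) delay(3)]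
    by (simp add: sim_def)
  ultimately show ?thesis
    using delay s_eq
    by (intro exI[of _ "[?t]"] exI[of _ "(q, \<lambda>x. v x + d)"]) (auto simp: matching_path_def same_sign_def)
next
  case (edge q w a M g R' q')
  obtain v where s_eq: "s = (q, v)"
    using s edge by (cases s) (auto simp: sim_def)
  have v: "(q, v) \<in> ta_states A" "clocks_equiv v w"
    using s edge s_eq by (auto simp: sim_def)
  from edge(2) show ?thesis
  proof (cases rule: ta_edges_bounded_wtbaE)
    case (lifted l R)
    have eq': "clocks_equiv (reset_val v R) (reset_val w R')"
      using clock_equiv_cap_reset[OF v(2)] lifted(3) by simp
    have sat: "cc_sat v g"
      using guard_sat_equiv[OF lifted(1) v(2)] edge(4) by simp
    have s': "(q', reset_val v R) \<in> ta_states A"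
      by (rule ta_states_A_equiv[OF edge(5) eq'])
        (use v(1) in \<open>auto simp: ta_states_def intro: reset_val_nonneg\<close>)
    let ?t = "((q, v), Inl l, M, 0, (q', reset_val v R))"
    have "?t \<in> ta_trans A"
      by (rule ta_trans_edgeI[OF lifted(1) v(1) sat s'])
    moreover have "sim (q', reset_val v R) (q', reset_val w R')"
      using s' edge(5) eq' by (simp add: sim_def)
    ultimately show ?thesis
      using edge s_eq
      by (intro exI[of _ "[?t]"] exI[of _ "(q', reset_val v R)"]) (auto simp: matching_path_def same_sign_def)
  next
    case (eps y)
    have "real K + 1 \<le> w y"
      using edge(4) eps(5) by simp
    then have eq': "clocks_equiv v (reset_val w R')"
      using clock_equiv_reset_above[OF v(2)] eps(6) by (simp add: add.commute)
    let ?t = "((q, v), Inr 0, {}, real_of_int (ta_rate A q) * 0, (q, \<lambda>x. v x + 0))"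
    have "?t \<in> ta_trans A"
      by (rule ta_trans_delayI[OF v(1)]) (use v(1) in \<open>auto simp: ta_states_def\<close>)
    then show ?thesis
      using edge s_eq eps v(1) eq'
      by (intro exI[of _ "[?t]"] exI[of _ "(q, v)"]) (auto simp: matching_path_def same_sign_def sim_def)
  qed
qed

lemma sim_init:
  "(ta_init A, \<lambda>x. 0) \<in> ta_states A \<Longrightarrow> sim (wba_init (sem A)) (wba_init (sem Abar))"
  by (simp add: sem_def sim_def ta_states_Abar clock_equiv_def)

theorem accepted_feasible_run_iff:
  "(\<exists>\<rho>. inf_run (sem A) \<rho> \<and> feasible b c \<rho> \<and> buchi_acc (sem A) \<rho>)
    \<longleftrightarrow> (\<exists>\<rho>. inf_run (sem Abar) \<rho> \<and> feasible b c \<rho> \<and> buchi_acc (sem Abar) \<rho>)"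
proof
  assume "\<exists>\<rho>. inf_run (sem A) \<rho> \<and> feasible b c \<rho> \<and> buchi_acc (sem A) \<rho>"
  then obtain \<rho> where run: "inf_run (sem A) \<rho>" "feasible b c \<rho>" "buchi_acc (sem A) \<rho>"
    by blast
  have init: "sim (wba_init (sem A)) (wba_init (sem Abar))"
    using sim_init inf_run_sem_init_state[OF run(1)] .
  show "\<exists>\<rho>. inf_run (sem Abar) \<rho> \<and> feasible b c \<rho> \<and> buchi_acc (sem Abar) \<rho>"
    by (rule accepted_feasible_run_simulation[where S = sim, OF _ init _ run])
      (auto simp: sem_def simp del: split_paired_Ex intro: sim_step_forward)
next
  assume "\<exists>\<rho>. inf_run (sem Abar) \<rho> \<and> feasible b c \<rho> \<and> buchi_acc (sem Abar) \<rho>"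
  then obtain \<rho> where run: "inf_run (sem Abar) \<rho>" "feasible b c \<rho>" "buchi_acc (sem Abar) \<rho>"
    by blast
  have init: "sim (wba_init (sem A)) (wba_init (sem Abar))"
    using sim_init inf_run_sem_init_state[OF run(1)] by (simp add: ta_states_Abar)
  show "\<exists>\<rho>. inf_run (sem A) \<rho> \<and> feasible b c \<rho> \<and> buchi_acc (sem A) \<rho>"
    by (rule accepted_feasible_run_simulation[where S = "\<lambda>s' s. sim s s'", OF _ init _ run])
      (auto simp: sem_def simp del: split_paired_Ex intro: sim_step_backward)
qed

end

theorem lemma4:
  fixes A :: "('s, 'm, 'q, 'c) wtba" and b c :: nat
  assumes "wf_wtba A"
  shows "\<exists>Abar :: ('s option, 'm, 'q, 'c) wtba.
           wf_wtba Abar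
         \<and> ta_alph Abar = Some ` ta_alph A \<union> {None}
         \<and> ta_colors Abar = ta_colors A \<and> ta_locs Abar = ta_locs A
         \<and> ta_init Abar = ta_init A \<and> ta_clocks Abar = ta_clocks A
         \<and> ta_rate Abar = ta_rate A
         \<and> (\<forall>(q, v) \<in> wba_states (sem Abar). \<forall>x \<in> ta_clocks A.
               v x \<le> real_of_int (max_const A) + 2)
         \<and> ((\<exists>\<rho>. inf_run (sem A) \<rho> \<and> feasible b c \<rho> \<and> buchi_acc (sem A) \<rho>)
            \<longleftrightarrow> (\<exists>\<rho>. inf_run (sem Abar) \<rho> \<and> feasible b c \<rho> \<and> buchi_acc (sem Abar) \<rho>))"
proof -
  define K where "K = nat (max_const A)"
  have K: "real K = real_of_int (max_const A)"
    using max_const_nonneg[OF assms] by (simp add: K_def)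
  interpret clock_bounding A K
    using assms max_const_nonneg[OF assms] by unfold_locales (simp_all add: K_def)
  have "\<forall>(q, v) \<in> wba_states (sem Abar). \<forall>x \<in> ta_clocks A. v x \<le> real_of_int (max_const A) + 2"
    by (auto simp: sem_def ta_states_Abar K)
  then show ?thesis
    using wf_bounded_wtba[OF assms] accepted_feasible_run_iff by (intro exI[of _ Abar]) simp
qed

end
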